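(* Let $r>0$ and let $B_r=\{F\in CBV(I):\|F\|_{BV}\leq r\}$. Then there exist a subinterval $J\subseteq\mathbb{R}$ and an uncountable family $\{F_h\in CBV(I):h\in J\}$ such that: $F_h\in B_r$ for each $h\in J$; $F_h(0)=F_h(1)=0$ for each $h\in J$; and $\|F_{h_1}-F_{h_2}\|_{BV}=2r$ for any distinct $h_1,h_2\in J$.
   Context: $I=[0,1]$. $CBV(I)$ is the space of continuous real functions $F$ on $I$ of bounded variation, i.e. with $V(F)=\sup\sum_{i=1}^m|F(x_i)-F(x_{i-1})|<\infty$, the supremum over partitions $0=x_0<\dots<x_m=1$; it is normed by $\|F\|_{BV}=|F(0)|+V(F)$. *)

theory Defs
  imports "HOL-Analysis.Analysis"
begin

text \<open>Functions on I = [0,1] are represented as real \<Rightarrow> real; only values on [0,1] matter.\<close>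

definition is_partition :: "real list \<Rightarrow> bool" where
  "is_partition xs \<longleftrightarrow> length xs \<ge> 2 \<and> hd xs = 0 \<and> last xs = 1 \<and> sorted_wrt (<) xs"

definition var_sums :: "(real \<Rightarrow> real) \<Rightarrow> real set" where
  "var_sums F = {(\<Sum>i<length xs - 1. \<bar>F (xs ! (i+1)) - F (xs ! i)\<bar>) | xs. is_partition xs}"

definition variation :: "(real \<Rightarrow> real) \<Rightarrow> real" where
  "variation F = Sup (var_sums F)"

definition CBV :: "(real \<Rightarrow> real) set" where
  "CBV = {F. continuous_on {0..1} F \<and> bdd_above (var_sums F)}"

definition bv_norm :: "(real \<Rightarrow> real) \<Rightarrow> real" where
  "bv_norm F = \<bar>F 0\<bar> + variation F"

definition BV_ball :: "real \<Rightarrow> (real \<Rightarrow> real) set" where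
  "BV_ball r = {F \<in> CBV. bv_norm F \<le> r}"

end

theory Submission
  imports Defs
begin

text \<open>
  Send \<open>x \<in> [0,1)\<close> with binary digits \<open>b\<^sub>l(x)\<close> to \<open>\<psi>(x) = \<Sum>\<^sub>l b\<^sub>l(x) 6\<^sup>-\<^sup>l\<^sup>-\<^sup>1\<close>. Then \<open>\<psi>\<close>
  is strictly increasing and its generalized inverse \<open>C\<close> is a continuous staircase rising from 0
  to 1 only on the range of \<open>\<psi>\<close>, whose base-6 digits are all 0 or 1. Hence
  \<open>G\<^sub>h(y) = C(y - 3\<psi>(h))\<close> rises only where the \<open>l\<close>-th base-6 digit of \<open>y\<close> is
  \<open>3b\<^sub>l(h)\<close> or \<open>3b\<^sub>l(h) + 1\<close>. If \<open>b\<^sub>i(h) \<noteq> b\<^sub>i(g)\<close>, then on the grid of mesh \<open>6\<^sup>-\<^sup>i\<^sup>-\<^sup>1\<close> the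
  staircases \<open>G\<^sub>h\<close> and \<open>G\<^sub>g\<close> never rise on the same cell, so \<open>G\<^sub>h - G\<^sub>g\<close> has variation 2.
  The bump \<open>F\<^sub>h(x) = r/2 (G\<^sub>h(2x) - G\<^sub>h(2x - 1))\<close> rises monotonically from 0 to \<open>r/2\<close> and falls
  back to 0, so it has norm \<open>r\<close>, while \<open>F\<^sub>h - F\<^sub>g\<close> has variation \<open>2r\<close>.
\<close>

section \<open>Base-6 expansions\<close>

primrec base6_prefix :: "(nat \<Rightarrow> int) \<Rightarrow> nat \<Rightarrow> int" where
  "base6_prefix a 0 = 0"
| "base6_prefix a (Suc n) = 6 * base6_prefix a n + a n"

definition base6_val :: "(nat \<Rightarrow> int) \<Rightarrow> real" where
  "base6_val a = (\<Sum>l. of_int (a l) / 6 ^ Suc l)"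

lemma sums_div_power6: "(\<lambda>i. (B::real) / 6 ^ Suc i) sums (B / 5)"
proof -
  have "(\<lambda>i. (B/6) * (1/6) ^ i) sums ((B/6) * (1 / (1 - 1/6)))"
    by (intro sums_mult geometric_sums) simp
  moreover have "(\<lambda>i. (B/6) * (1/6) ^ i) = (\<lambda>i. (B::real) / 6 ^ Suc i)"
    by (auto simp: power_divide field_simps)
  ultimately show ?thesis by simp
qed

lemma summable_base6_digits:
  assumes "\<And>l. 0 \<le> a l" "\<And>l. a l \<le> B"
  shows "summable (\<lambda>l. of_int (a l) / (6::real) ^ Suc l)"
proof (rule summable_comparison_test)
  show "\<exists>N. \<forall>n\<ge>N. norm (of_int (a n) / (6::real) ^ Suc n) \<le> of_int B / 6 ^ Suc n"
    using assms by (auto intro!: divide_right_mono)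
  show "summable (\<lambda>n. of_int B / (6::real) ^ Suc n)"
    using sums_div_power6 by (rule sums_summable)
qed

lemma sums_base6_val:
  assumes "\<And>l. 0 \<le> a l" "\<And>l. a l \<le> B"
  shows "(\<lambda>l. of_int (a l) / 6 ^ Suc l) sums base6_val a"
  unfolding base6_val_def using summable_base6_digits[OF assms] by (rule summable_sums)

lemma sum_base6_digits: "(\<Sum>l<n. of_int (a l) / (6::real) ^ Suc l) = of_int (base6_prefix a n) / 6 ^ n"
  by (induction n) (auto simp: field_simps)

lemma base6_prefix_cong: "(\<And>l. l < n \<Longrightarrow> a l = b l) \<Longrightarrow> base6_prefix a n = base6_prefix b n"
  by (induction n) auto

lemma base6_val_shift:
  "(\<lambda>l. of_int (a l) / 6 ^ Suc l) sums base6_val a \<Longrightarrow>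
    6 ^ n * base6_val a = of_int (base6_prefix a n) + base6_val (\<lambda>l. a (l + n))"
proof -
  assume sums: "(\<lambda>l. of_int (a l) / 6 ^ Suc l) sums base6_val a"
  have "(\<lambda>l. of_int (a (l + n)) / (6::real) ^ Suc (l + n)) sums
          (base6_val a - of_int (base6_prefix a n) / 6 ^ n)"
    using sums by (subst sums_iff_shift) (simp only: sum_base6_digits diff_add_cancel)
  then have "(\<lambda>l. 6 ^ n * (of_int (a (l + n)) / (6::real) ^ Suc (l + n))) sums
          (6 ^ n * (base6_val a - of_int (base6_prefix a n) / 6 ^ n))"
    by (rule sums_mult)
  then have "(\<lambda>l. of_int (a (l + n)) / (6::real) ^ Suc l) sums
          (6 ^ n * base6_val a - of_int (base6_prefix a n))"
    by (simp add: power_add right_diff_distrib)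
  then show ?thesis
    unfolding base6_val_def by (simp add: sums_iff)
qed

lemma base6_val_bounds:
  assumes "\<And>l. 0 \<le> a l" "\<And>l. a l \<le> B"
  shows "of_int (base6_prefix a n) \<le> 6 ^ n * base6_val a"
    and "6 ^ n * base6_val a \<le> of_int (base6_prefix a n) + of_int B / 5"
proof -
  let ?tail = "\<lambda>l. a (l + n)"
  have tail_sums: "(\<lambda>l. of_int (?tail l) / 6 ^ Suc l) sums base6_val ?tail"
    by (rule sums_base6_val[of _ B]) (use assms in auto)
  have shift: "6 ^ n * base6_val a = of_int (base6_prefix a n) + base6_val ?tail"
    by (rule base6_val_shift[OF sums_base6_val[of a B, OF assms]])
  have "0 \<le> base6_val ?tail"
    by (rule sums_le[OF _ sums_zero tail_sums]) (use assms in simp)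
  moreover have "base6_val ?tail \<le> of_int B / 5"
    by (rule sums_le[OF _ tail_sums sums_div_power6]) (use assms in \<open>auto intro!: divide_right_mono\<close>)
  ultimately show "of_int (base6_prefix a n) \<le> 6 ^ n * base6_val a"
    and "6 ^ n * base6_val a \<le> of_int (base6_prefix a n) + of_int B / 5"
    unfolding shift by simp_all
qed

lemma base6_val_add_mult3:
  assumes "\<And>l. 0 \<le> a l" "\<And>l. a l \<le> 1" "\<And>l. 0 \<le> b l" "\<And>l. b l \<le> 1"
  shows "base6_val (\<lambda>l. a l + 3 * b l) = base6_val a + 3 * base6_val b"
proof -
  have "(\<lambda>l. of_int (a l) / (6::real) ^ Suc l + 3 * (of_int (b l) / 6 ^ Suc l))
          sums (base6_val a + 3 * base6_val b)"
    by (intro sums_add sums_mult sums_base6_val[of _ 1]) (use assms in auto)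
  moreover have "(\<lambda>l. of_int (a l + 3 * b l) / (6::real) ^ Suc l) sums base6_val (\<lambda>l. a l + 3 * b l)"
    by (rule sums_base6_val[of _ 4]) (smt (verit) assms)+
  ultimately show ?thesis by (simp add: add_divide_distrib sums_iff)
qed

section \<open>The Cantor map and its inverse staircase\<close>

definition binary_digit :: "nat \<Rightarrow> real \<Rightarrow> int" where
  "binary_digit j x = \<lfloor>2 ^ Suc j * x\<rfloor> mod 2"

definition cantor6 :: "real \<Rightarrow> real" where
  "cantor6 x = base6_val (\<lambda>l. binary_digit l x)"

lemma binary_digit_bounds: "0 \<le> binary_digit j x" "binary_digit j x \<le> 1"
  by (auto simp: binary_digit_def)

lemma floor_double_power2:
  "\<lfloor>2 ^ Suc j * x\<rfloor> = 2 * \<lfloor>2 ^ j * x\<rfloor> + binary_digit j x"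
proof -
  define y where "y = 2 ^ j * x"
  have y2: "2 ^ Suc j * x = 2 * y" by (simp add: y_def)
  have "\<lfloor>2 * y\<rfloor> = 2 * \<lfloor>y\<rfloor> \<or> \<lfloor>2 * y\<rfloor> = 2 * \<lfloor>y\<rfloor> + 1"
  proof (cases "y < of_int \<lfloor>y\<rfloor> + 1/2")
    case True
    then have "\<lfloor>2 * y\<rfloor> = 2 * \<lfloor>y\<rfloor>"
      by (intro floor_unique) (use floor_correct[of y] in linarith)+
    then show ?thesis by simp
  next
    case False
    then have "\<lfloor>2 * y\<rfloor> = 2 * \<lfloor>y\<rfloor> + 1"
      by (intro floor_unique) (use floor_correct[of y] in linarith)+
    then show ?thesis by simp
  qed
  then show ?thesis
    unfolding binary_digit_def y2 y_def[symmetric] by auto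
qed

lemma cantor6_bounds: "0 \<le> cantor6 x" "cantor6 x \<le> 1/5"
  using base6_val_bounds[of "\<lambda>l. binary_digit l x" 1 0] binary_digit_bounds
  by (auto simp: cantor6_def)

lemma cantor6_0 [simp]: "cantor6 0 = 0"
  by (simp add: cantor6_def binary_digit_def base6_val_def)

lemma binary_digit_first_difference:
  assumes "0 \<le> x" "x < y" "y < 1"
  obtains j where "\<And>l. l < j \<Longrightarrow> binary_digit l x = binary_digit l y"
    "binary_digit j x = 0" "binary_digit j y = 1"
proof -
  define fl where "fl n z = \<lfloor>2 ^ n * z\<rfloor>" for n and z :: real
  have fl_mono: "fl n x \<le> fl n y" for n
    unfolding fl_def using assms by (intro floor_mono mult_left_mono) auto
  obtain n where n: "1 < 2 ^ n * (y - x)"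
    using real_arch_pow[of 2 "1 / (y - x)"] assms by (auto simp: field_simps)
  have "fl n x \<noteq> fl n y"
  proof -
    have "of_int (fl n x) \<le> 2 ^ n * x" unfolding fl_def by simp
    also have "\<dots> < 2 ^ n * y - 1" using n by (simp add: algebra_simps)
    also have "\<dots> < of_int (fl n y)" unfolding fl_def by linarith
    finally show ?thesis by auto
  qed
  define n0 where "n0 = (LEAST n. fl n x \<noteq> fl n y)"
  have n0: "fl n0 x \<noteq> fl n0 y"
    unfolding n0_def using \<open>fl n x \<noteq> fl n y\<close> by (rule LeastI)
  have below: "m < n0 \<Longrightarrow> fl m x = fl m y" for m
    unfolding n0_def using not_less_Least by blast
  have "fl 0 x = 0" "fl 0 y = 0" using assms by (simp_all add: fl_def floor_eq_iff)
  then obtain j where j: "n0 = Suc j" using n0 by (cases n0) auto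
  have same: "binary_digit l x = binary_digit l y" if "l < j" for l
    using below[of "Suc l"] that j by (simp add: binary_digit_def fl_def)
  have "binary_digit j x < binary_digit j y"
  proof -
    have "fl (Suc j) x < fl (Suc j) y" using n0 fl_mono[of "Suc j"] j by auto
    moreover have "fl j x = fl j y" using below[of j] j by simp
    ultimately show ?thesis
      using floor_double_power2[of j x] floor_double_power2[of j y] by (simp add: fl_def)
  qed
  then have "binary_digit j x = 0" "binary_digit j y = 1"
    using binary_digit_bounds[of j x] binary_digit_bounds[of j y] by auto
  with same show ?thesis by (rule that)
qed

lemma base6_val_less:
  assumes "\<And>l. 0 \<le> a l \<and> a l \<le> 1" "\<And>l. 0 \<le> b l \<and> b l \<le> 1"
    and "\<And>l. l < j \<Longrightarrow> a l = b l" "a j = 0" "b j = 1"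
  shows "base6_val a < base6_val b"
proof -
  have "base6_prefix a j = base6_prefix b j"
    by (rule base6_prefix_cong) (use assms(3) in auto)
  then have prefix_Suc: "base6_prefix b (Suc j) = base6_prefix a (Suc j) + 1"
    using assms(4,5) by simp
  have "6 ^ Suc j * base6_val a \<le> of_int (base6_prefix a (Suc j)) + 1/5"
    using base6_val_bounds(2)[of a 1 "Suc j"] assms(1) by simp
  also have "\<dots> < of_int (base6_prefix b (Suc j))"
    using prefix_Suc by simp
  also have "\<dots> \<le> 6 ^ Suc j * base6_val b"
    using base6_val_bounds(1)[of b 1 "Suc j"] assms(2) by simp
  finally show ?thesis by simp
qed

lemma cantor6_less:
  assumes "0 \<le> x" "x < y" "y < 1"
  shows "cantor6 x < cantor6 y"
proof -
  obtain j where "\<And>l. l < j \<Longrightarrow> binary_digit l x = binary_digit l y"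
    "binary_digit j x = 0" "binary_digit j y = 1"
    using binary_digit_first_difference[OF assms] by blast
  then show ?thesis
    unfolding cantor6_def by (intro base6_val_less) (auto simp: binary_digit_bounds)
qed

lemma cantor6_mono: "0 \<le> x \<Longrightarrow> x \<le> y \<Longrightarrow> y < 1 \<Longrightarrow> cantor6 x \<le> cantor6 y"
  using cantor6_less[of x y] by (cases "x = y") auto

definition cantor6_sublevel :: "real \<Rightarrow> real set" where
  "cantor6_sublevel t = insert 0 {w. 0 \<le> w \<and> w < 1 \<and> cantor6 w \<le> t}"

definition cantor6_inv :: "real \<Rightarrow> real" where
  "cantor6_inv t = Sup (cantor6_sublevel t)"

lemma bdd_above_cantor6_sublevel: "bdd_above (cantor6_sublevel t)"
  unfolding cantor6_sublevel_def by (rule bdd_aboveI[of _ 1]) auto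

lemma cantor6_inv_bounds: "0 \<le> cantor6_inv t" "cantor6_inv t \<le> 1"
  unfolding cantor6_inv_def
  by (rule cSup_upper[OF _ bdd_above_cantor6_sublevel], simp add: cantor6_sublevel_def)
     (rule cSup_least, auto simp: cantor6_sublevel_def)

lemma cantor6_inv_mono: "s \<le> t \<Longrightarrow> cantor6_inv s \<le> cantor6_inv t"
  unfolding cantor6_inv_def
  by (rule cSup_subset_mono[OF _ bdd_above_cantor6_sublevel]) (auto simp: cantor6_sublevel_def)

lemma cantor6_inv_cantor6:
  assumes "0 \<le> w" "w < 1"
  shows "cantor6_inv (cantor6 w) = w"
  unfolding cantor6_inv_def
proof (rule cSup_eq_maximum)
  show "w \<in> cantor6_sublevel (cantor6 w)" using assms by (simp add: cantor6_sublevel_def)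
  show "x \<le> w" if "x \<in> cantor6_sublevel (cantor6 w)" for x
    using that assms cantor6_less[of w x] by (auto simp: cantor6_sublevel_def not_le[symmetric])
qed

lemma cantor6_inv_nonpos: "t \<le> 0 \<Longrightarrow> cantor6_inv t = 0"
  unfolding cantor6_inv_def
proof (rule cSup_eq_maximum)
  show "0 \<in> cantor6_sublevel t" by (simp add: cantor6_sublevel_def)
  show "x \<le> 0" if "t \<le> 0" "x \<in> cantor6_sublevel t" for x
    using that cantor6_less[of 0 x] by (force simp: cantor6_sublevel_def)
qed

lemma cantor6_inv_eq_1: "1/5 \<le> t \<Longrightarrow> cantor6_inv t = 1"
proof -
  assume "1/5 \<le> t"
  then have "cantor6 w \<le> t" for w
    using cantor6_bounds(2)[of w] by linarith
  then have "cantor6_sublevel t = {0..<1}"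
    by (auto simp: cantor6_sublevel_def)
  then show ?thesis by (simp add: cantor6_inv_def)
qed

lemma cantor6_inv_const_on_gap:
  assumes "a \<le> b" and gap: "\<And>w. 0 \<le> w \<Longrightarrow> w < 1 \<Longrightarrow> \<not> (a < cantor6 w \<and> cantor6 w < b)"
  shows "cantor6_inv a = cantor6_inv b"
proof (rule ccontr)
  \<comment> \<open>two points strictly between \<open>cantor6_inv a\<close> and \<open>cantor6_inv b\<close> have distinct images
    in \<open>(a, b]\<close>, so the smaller image lies in the gap\<close>
  assume "cantor6_inv a \<noteq> cantor6_inv b"
  then have lt: "cantor6_inv a < cantor6_inv b" using cantor6_inv_mono[OF assms(1)] by simp
  have between: "0 \<le> w \<and> w < 1 \<and> a < cantor6 w \<and> cantor6 w \<le> b"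
    if w: "cantor6_inv a < w" "w < cantor6_inv b" for w
  proof -
    obtain w' where w': "w' \<in> cantor6_sublevel b" "w < w'"
      using w(2) less_cSup_iff[OF _ bdd_above_cantor6_sublevel, of b w]
      by (auto simp: cantor6_inv_def cantor6_sublevel_def)
    have w0: "0 < w" using w cantor6_inv_bounds(1)[of a] by simp
    then have "0 \<le> w' \<and> w' < 1 \<and> cantor6 w' \<le> b" using w' by (auto simp: cantor6_sublevel_def)
    then have "w < 1" "cantor6 w \<le> b" using w' w0 cantor6_mono[of w w'] by auto
    moreover have "w \<notin> cantor6_sublevel a"
      using w(1) cSup_upper[OF _ bdd_above_cantor6_sublevel, of w a] by (auto simp: cantor6_inv_def)
    ultimately show ?thesis using w0 by (auto simp: cantor6_sublevel_def)
  qed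
  define w1 where "w1 = cantor6_inv a + (cantor6_inv b - cantor6_inv a) / 3"
  define w2 where "w2 = cantor6_inv a + 2 * (cantor6_inv b - cantor6_inv a) / 3"
  have w1: "0 \<le> w1 \<and> w1 < 1 \<and> a < cantor6 w1 \<and> cantor6 w1 \<le> b"
    using lt unfolding w1_def by (intro between) (simp_all add: field_simps)
  have w2: "0 \<le> w2 \<and> w2 < 1 \<and> a < cantor6 w2 \<and> cantor6 w2 \<le> b"
    using lt unfolding w2_def by (intro between) (simp_all add: field_simps)
  have "cantor6 w1 < cantor6 w2" using w1 w2 lt by (intro cantor6_less) (auto simp: w1_def w2_def)
  then show False using gap[of w1] w1 w2 by auto
qed

text \<open>Extended by the identity outside \<open>[0,1]\<close>, \<open>cantor6_inv\<close> becomes a monotone map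
  onto \<open>\<real>\<close>, and such a map is continuous.\<close>

lemma continuous_cantor6_inv: "continuous_on UNIV cantor6_inv"
proof -
  define E where "E t = cantor6_inv t + min t 0 + max (t - 1) 0" for t
  have "range E = UNIV"
  proof safe
    fix v :: real
    consider "v < 0" | "0 \<le> v" "v < 1" | "1 \<le> v" by linarith
    then show "v \<in> range E"
    proof cases
      case 1
      then have "E v = v" using cantor6_inv_nonpos[of v] by (simp add: E_def)
      then show ?thesis by (metis rangeI)
    next
      case 2
      then have "E (cantor6 v) = v" using cantor6_inv_cantor6[of v] cantor6_bounds[of v]
        by (simp add: E_def)
      then show ?thesis by (metis rangeI)
    next
      case 3
      then have "E v = v" using cantor6_inv_eq_1[of v] by (simp add: E_def)
      then show ?thesis by (metis rangeI)
    qed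
  qed auto
  moreover have "E x \<le> E y" if "x \<le> y" for x y
    using cantor6_inv_mono[OF that] that by (simp add: E_def add_mono)
  ultimately have "continuous_on UNIV E"
    by (intro continuous_onI_mono) auto
  then have "continuous_on UNIV (\<lambda>t. E t - min t 0 - max (t - 1) 0)"
    by (intro continuous_intros) auto
  moreover have "cantor6_inv = (\<lambda>t. E t - min t 0 - max (t - 1) 0)" by (auto simp: E_def)
  ultimately show ?thesis by metis
qed

section \<open>Shifted staircases\<close>

definition stair :: "real \<Rightarrow> real \<Rightarrow> real" where
  "stair h y = cantor6_inv (y - 3 * cantor6 h)"

lemma stair_nonpos: "y \<le> 0 \<Longrightarrow> stair h y = 0"
  unfolding stair_def using cantor6_bounds(1)[of h] by (intro cantor6_inv_nonpos) auto

lemma stair_ge_1: "1 \<le> y \<Longrightarrow> stair h y = 1"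
  unfolding stair_def using cantor6_bounds(2)[of h] by (intro cantor6_inv_eq_1) auto

lemma stair_mono: "y \<le> z \<Longrightarrow> stair h y \<le> stair h z"
  unfolding stair_def by (intro cantor6_inv_mono) auto

lemma stair_bounds: "0 \<le> stair h y" "stair h y \<le> 1"
  unfolding stair_def by (rule cantor6_inv_bounds)+

lemma continuous_stair: "continuous_on UNIV (stair h)"
  unfolding stair_def
  by (rule continuous_on_compose2[OF continuous_cantor6_inv]) (auto intro!: continuous_intros)

text \<open>If the cell \<open>[k, k+1] / 6\<^sup>i\<^sup>+\<^sup>1\<close> contained a value \<open>cantor6 w + 3 cantor6 h\<close>, its \<open>i\<close>-th
  base-6 digit \<open>binary_digit i w + 3 binary_digit i h\<close> would be \<open>k mod 6\<close>.\<close>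

lemma stair_flat_cell:
  assumes "0 \<le> h" "h < 1"
    and "int k mod 6 \<noteq> 3 * binary_digit i h" "int k mod 6 \<noteq> 3 * binary_digit i h + 1"
  shows "stair h (real (Suc k) / 6 ^ Suc i) = stair h (real k / 6 ^ Suc i)"
proof -
  define N :: real where "N = 6 ^ Suc i"
  have N0: "0 < N" by (simp add: N_def)
  have "cantor6_inv (real k / N - 3 * cantor6 h) = cantor6_inv (real (Suc k) / N - 3 * cantor6 h)"
  proof (rule cantor6_inv_const_on_gap)
    show "real k / N - 3 * cantor6 h \<le> real (Suc k) / N - 3 * cantor6 h"
      using N0 by (simp add: divide_right_mono)
    fix w :: real
    assume "0 \<le> w" "w < 1"
    show "\<not> (real k / N - 3 * cantor6 h < cantor6 w \<and> cantor6 w < real (Suc k) / N - 3 * cantor6 h)"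
    proof
      assume in_cell: "real k / N - 3 * cantor6 h < cantor6 w \<and> cantor6 w < real (Suc k) / N - 3 * cantor6 h"
      define A where "A l = binary_digit l w + 3 * binary_digit l h" for l
      have A_bounds: "0 \<le> A l" "A l \<le> 4" for l
        using binary_digit_bounds[of l w] binary_digit_bounds[of l h] by (auto simp: A_def)
      have "base6_val A = cantor6 w + 3 * cantor6 h"
        unfolding A_def cantor6_def by (rule base6_val_add_mult3) (auto simp: binary_digit_bounds)
      then have "real k < N * base6_val A" "N * base6_val A < real k + 1"
        using in_cell N0 by (simp_all add: field_simps)
      moreover have "of_int (base6_prefix A (Suc i)) \<le> N * base6_val A"
        "N * base6_val A \<le> of_int (base6_prefix A (Suc i)) + 4/5"
        using base6_val_bounds[of A 4 "Suc i"] A_bounds by (simp_all add: N_def)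
      ultimately have "int k = base6_prefix A (Suc i)" by linarith
      also have "\<dots> mod 6 = A i" using A_bounds[of i] by simp
      finally have "int k mod 6 = A i" .
      then show False using assms(3,4) binary_digit_bounds[of i w] by (auto simp: A_def)
    qed
  qed
  then show ?thesis by (simp add: stair_def N_def)
qed

lemma stair_grid_variation:
  assumes "0 \<le> h" "h < 1" "0 \<le> g" "g < 1" "h \<noteq> g"
  obtains N :: nat where "0 < N"
    "(\<Sum>k<N. \<bar>(stair h (real (Suc k) / N) - stair g (real (Suc k) / N)) -
               (stair h (real k / N) - stair g (real k / N))\<bar>) = 2"
proof -
  have "cantor6 h \<noteq> cantor6 g"
    using cantor6_less[of h g] cantor6_less[of g h] assms by (cases "h < g") auto
  then obtain i where i: "binary_digit i h \<noteq> binary_digit i g"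
    unfolding cantor6_def by fastforce
  define N :: nat where "N = 6 ^ Suc i"
  have N0: "0 < N" by (simp add: N_def)
  define dh where "dh k = stair h (real (Suc k) / N) - stair h (real k / N)" for k
  define dg where "dg k = stair g (real (Suc k) / N) - stair g (real k / N)" for k
  have nonneg: "0 \<le> dh k" "0 \<le> dg k" for k
    unfolding dh_def dg_def by (auto intro!: stair_mono divide_right_mono)
  have disjoint: "dh k = 0 \<or> dg k = 0" for k
  proof -
    have "(int k mod 6 \<noteq> 3 * binary_digit i h \<and> int k mod 6 \<noteq> 3 * binary_digit i h + 1) \<or>
          (int k mod 6 \<noteq> 3 * binary_digit i g \<and> int k mod 6 \<noteq> 3 * binary_digit i g + 1)"
      using i binary_digit_bounds[of i h] binary_digit_bounds[of i g] by auto
    then show ?thesis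
      using stair_flat_cell[of h k i] stair_flat_cell[of g k i] assms
      by (auto simp: dh_def dg_def N_def)
  qed
  have "\<bar>dh k - dg k\<bar> = dh k + dg k" for k
    using nonneg[of k] disjoint[of k] by auto
  then have "(\<Sum>k<N. \<bar>dh k - dg k\<bar>) = (\<Sum>k<N. dh k) + (\<Sum>k<N. dg k)"
    by (simp add: sum.distrib)
  also have "\<dots> = 2"
    unfolding dh_def dg_def sum_lessThan_telescope[where f = "\<lambda>k. stair _ (real k / N)"]
    using N0 by (simp add: stair_ge_1 stair_nonpos)
  finally show ?thesis
    using N0 that unfolding dh_def dg_def by (simp add: algebra_simps)
qed

section \<open>Variation\<close>

lemma partition_nth_bounds:
  assumes "is_partition xs" "i < length xs"
  shows "0 \<le> xs ! i" "xs ! i \<le> 1"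
proof -
  have sorted: "sorted_wrt (<) xs" and ne: "xs \<noteq> []"
    using assms(1) by (auto simp: is_partition_def)
  have ends: "xs ! 0 = 0" "xs ! (length xs - 1) = 1"
    using assms(1) hd_conv_nth[OF ne] last_conv_nth[OF ne] by (auto simp: is_partition_def)
  have le: "xs ! a \<le> xs ! b" if "a \<le> b" "b < length xs" for a b
    using sorted_wrt_nth_less[OF sorted, of a b] that by (cases "a = b") auto
  show "0 \<le> xs ! i" using le[of 0 i] ends assms(2) by simp
  show "xs ! i \<le> 1" using le[of i "length xs - 1"] ends assms(2) by simp
qed

lemma var_sums_le_majorant:
  assumes majorant: "\<And>x y. 0 \<le> x \<Longrightarrow> x \<le> y \<Longrightarrow> y \<le> 1 \<Longrightarrow> \<bar>F y - F x\<bar> \<le> T y - T x"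
    and "s \<in> var_sums F"
  shows "s \<le> T 1 - T 0"
proof -
  obtain xs where xs: "is_partition xs"
    and s: "s = (\<Sum>i<length xs - 1. \<bar>F (xs ! (i + 1)) - F (xs ! i)\<bar>)"
    using assms(2) by (auto simp: var_sums_def)
  have sorted: "sorted_wrt (<) xs" and ne: "xs \<noteq> []" using xs by (auto simp: is_partition_def)
  have "s \<le> (\<Sum>i<length xs - 1. T (xs ! Suc i) - T (xs ! i))"
    unfolding s
  proof (rule sum_mono)
    fix i assume "i \<in> {..<length xs - 1}"
    then have "Suc i < length xs" by auto
    then show "\<bar>F (xs ! (i + 1)) - F (xs ! i)\<bar> \<le> T (xs ! Suc i) - T (xs ! i)"
      using majorant[of "xs ! i" "xs ! Suc i"] sorted_wrt_nth_less[OF sorted, of i "Suc i"]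
        partition_nth_bounds[OF xs, of i] partition_nth_bounds[OF xs, of "Suc i"] by simp
  qed
  also have "\<dots> = T (xs ! (length xs - 1)) - T (xs ! 0)"
    by (rule sum_lessThan_telescope)
  also have "\<dots> = T 1 - T 0"
    using xs hd_conv_nth[OF ne] last_conv_nth[OF ne] by (simp add: is_partition_def)
  finally show ?thesis .
qed

lemma variation_le_majorant:
  assumes "\<And>x y. 0 \<le> x \<Longrightarrow> x \<le> y \<Longrightarrow> y \<le> 1 \<Longrightarrow> \<bar>F y - F x\<bar> \<le> T y - T x"
  shows "bdd_above (var_sums F)" "variation F \<le> T 1 - T 0"
proof -
  have "var_sums F \<noteq> {}"
    unfolding var_sums_def is_partition_def by (auto intro!: exI[of _ "[0, 1]"])
  then show "bdd_above (var_sums F)" "variation F \<le> T 1 - T 0"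
    using var_sums_le_majorant[of F T, OF assms] unfolding variation_def
    by (auto intro!: cSup_least bdd_aboveI)
qed

lemma grid_var_sum_le_variation:
  assumes "bdd_above (var_sums F)" "0 < n"
  shows "(\<Sum>i<n. \<bar>F (real (Suc i) / n) - F (real i / n)\<bar>) \<le> variation F"
proof -
  define xs where "xs = map (\<lambda>k. real k / real n) [0..<n + 1]"
  have len: "length xs = n + 1" by (simp add: xs_def)
  have nth: "i < n + 1 \<Longrightarrow> xs ! i = real i / real n" for i
    by (simp add: xs_def nth_map del: upt_Suc)
  have "is_partition xs"
    unfolding is_partition_def
  proof (intro conjI)
    show "2 \<le> length xs" using len assms(2) by simp
    show "hd xs = 0" using nth[of 0] len hd_conv_nth[of xs] by fastforce
    show "last xs = 1" using nth[of n] len assms(2) last_conv_nth[of xs] by fastforce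
    show "sorted_wrt (<) xs" unfolding xs_def sorted_wrt_map
      by (rule sorted_wrt_mono_rel[OF _ sorted_wrt_upt])
        (use assms(2) in \<open>auto intro: divide_strict_right_mono\<close>)
  qed
  moreover have "(\<Sum>i<length xs - 1. \<bar>F (xs ! (i + 1)) - F (xs ! i)\<bar>) =
      (\<Sum>i<n. \<bar>F (real (Suc i) / n) - F (real i / n)\<bar>)"
    by (rule sum.cong) (simp_all add: len nth)
  ultimately have "(\<Sum>i<n. \<bar>F (real (Suc i) / n) - F (real i / n)\<bar>) \<in> var_sums F"
    unfolding var_sums_def by force
  then show ?thesis
    unfolding variation_def using assms(1) by (rule cSup_upper)
qed

section \<open>The bumps\<close>

definition bump :: "real \<Rightarrow> real \<Rightarrow> real \<Rightarrow> real" where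
  "bump r h x = r / 2 * (stair h (2 * x) - stair h (2 * x - 1))"

lemma bump_lower_half: "x \<le> 1/2 \<Longrightarrow> bump r h x = r / 2 * stair h (2 * x)"
  by (simp add: bump_def stair_nonpos)

lemma bump_upper_half: "1/2 \<le> x \<Longrightarrow> bump r h x = r / 2 * (1 - stair h (2 * x - 1))"
  by (simp add: bump_def stair_ge_1)

lemma bump_0 [simp]: "bump r h 0 = 0" and bump_1 [simp]: "bump r h 1 = 0"
  by (simp_all add: bump_def stair_nonpos stair_ge_1)

lemma bump_bounds: "0 < r \<Longrightarrow> 0 \<le> bump r h x \<and> bump r h x \<le> r / 2"
  using stair_bounds[of h "2 * x"] stair_bounds[of h "2 * x - 1"]
  by (cases "x \<le> 1/2") (simp_all add: bump_lower_half bump_upper_half mult_le_cancel_left1)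

lemma continuous_on_bump: "continuous_on {0..1} (bump r h)"
proof -
  have "continuous_on UNIV (\<lambda>x. r / 2 * (stair h (2 * x) - stair h (2 * x - 1)))"
    by (intro continuous_intros continuous_on_compose2[OF continuous_stair]) auto
  then show ?thesis unfolding bump_def[abs_def] by (rule continuous_on_subset) auto
qed

text \<open>\<open>bump_majorant r h x\<close> is the variation of \<open>bump r h\<close> on \<open>[0, x]\<close>.\<close>

definition bump_majorant :: "real \<Rightarrow> real \<Rightarrow> real \<Rightarrow> real" where
  "bump_majorant r h x = (if x \<le> 1/2 then bump r h x else r - bump r h x)"

lemma bump_increment_le_majorant:
  assumes "0 < r" "0 \<le> x" "x \<le> y" "y \<le> 1"
  shows "\<bar>bump r h y - bump r h x\<bar> \<le> bump_majorant r h y - bump_majorant r h x"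
proof -
  have "bump r h x \<le> bump r h y" if "y \<le> 1/2"
    using that assms by (simp add: bump_lower_half stair_mono)
  moreover have "bump r h y \<le> bump r h x" if "1/2 < x"
    using that assms by (simp add: bump_upper_half stair_mono)
  ultimately show ?thesis
    using bump_bounds[OF assms(1), of h x] bump_bounds[OF assms(1), of h y] assms(3)
    unfolding bump_majorant_def by auto
qed

lemma bump_in_BV_ball: "0 < r \<Longrightarrow> bump r h \<in> BV_ball r"
  using variation_le_majorant[of "bump r h" "bump_majorant r h", OF bump_increment_le_majorant]
    continuous_on_bump
  by (auto simp: BV_ball_def CBV_def bv_norm_def bump_majorant_def)

lemma sum_lessThan_add:
  fixes f :: "nat \<Rightarrow> 'a::comm_monoid_add"
  shows "(\<Sum>i<m + n. f i) = (\<Sum>i<m. f i) + (\<Sum>k<n. f (m + k))"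
  by (induction n) (auto simp: add.assoc)

lemma bump_diff_grid_sum:
  assumes "0 < r" "0 \<le> h" "h < 1" "0 \<le> g" "g < 1" "h \<noteq> g"
  obtains N :: nat where "0 < N"
    "(\<Sum>i<2 * N. \<bar>(bump r h (real (Suc i) / (2 * N)) - bump r g (real (Suc i) / (2 * N))) -
                  (bump r h (real i / (2 * N)) - bump r g (real i / (2 * N)))\<bar>) = 2 * r"
proof -
  obtain N :: nat where N: "0 < N"
    and stair_sum: "(\<Sum>k<N. \<bar>(stair h (real (Suc k) / N) - stair g (real (Suc k) / N)) -
                   (stair h (real k / N) - stair g (real k / N))\<bar>) = 2"
    using stair_grid_variation[of h g] assms by auto
  define d where "d k = stair h (real k / N) - stair g (real k / N)" for k
  define D where "D i = bump r h (real i / (2 * N)) - bump r g (real i / (2 * N))" for i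
  have D_lower: "D k = r / 2 * d k" if "k \<le> N" for k
  proof -
    have "real k / (2 * N) \<le> 1/2" using that N by (simp add: field_simps)
    moreover have "2 * (real k / (2 * N)) = real k / N" by simp
    ultimately show ?thesis by (simp add: D_def d_def bump_lower_half right_diff_distrib)
  qed
  have D_upper: "D (N + k) = - (r / 2 * d k)" for k
  proof -
    have "1/2 \<le> real (N + k) / (2 * N)" using N by (simp add: field_simps)
    moreover have "2 * (real (N + k) / (2 * N)) - 1 = real k / N" using N by (simp add: field_simps)
    ultimately show ?thesis by (simp add: D_def d_def bump_upper_half algebra_simps)
  qed
  have scaled: "\<bar>r / 2 * a - r / 2 * b\<bar> = r / 2 * \<bar>a - b\<bar>" for a b
    unfolding right_diff_distrib[symmetric] abs_mult using assms(1) by simp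
  have lower: "\<bar>D (Suc k) - D k\<bar> = r / 2 * \<bar>d (Suc k) - d k\<bar>" if "k < N" for k
    using that by (simp only: D_lower Suc_leI less_imp_le scaled)
  have upper: "\<bar>D (Suc (N + k)) - D (N + k)\<bar> = r / 2 * \<bar>d (Suc k) - d k\<bar>" for k
    unfolding add_Suc_right[symmetric] D_upper diff_minus_eq_add uminus_add_conv_diff scaled
    by (simp add: abs_minus_commute)
  have "(\<Sum>i<N + N. \<bar>D (Suc i) - D i\<bar>) =
      (\<Sum>k<N. \<bar>D (Suc k) - D k\<bar>) + (\<Sum>k<N. \<bar>D (Suc (N + k)) - D (N + k)\<bar>)"
    by (rule sum_lessThan_add)
  also have "\<dots> = (\<Sum>k<N. r / 2 * \<bar>d (Suc k) - d k\<bar>) + (\<Sum>k<N. r / 2 * \<bar>d (Suc k) - d k\<bar>)"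
    by (intro arg_cong2[where f = "(+)"] sum.cong) (simp_all add: lower upper)
  also have "\<dots> = r * (\<Sum>k<N. \<bar>d (Suc k) - d k\<bar>)"
    unfolding sum_distrib_left[symmetric] by simp
  also have "\<dots> = 2 * r"
    using stair_sum unfolding d_def by simp
  finally have "(\<Sum>i<2 * N. \<bar>D (Suc i) - D i\<bar>) = 2 * r"
    by (simp only: mult_2)
  with N show ?thesis
    unfolding D_def by (rule that)
qed

lemma bv_norm_bump_diff:
  assumes "0 < r" "0 \<le> h" "h < 1" "0 \<le> g" "g < 1" "h \<noteq> g"
  shows "bv_norm (\<lambda>x. bump r h x - bump r g x) = 2 * r"
proof -
  let ?D = "\<lambda>x. bump r h x - bump r g x"
  have "\<bar>?D y - ?D x\<bar> \<le> (bump_majorant r h y + bump_majorant r g y) -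
                          (bump_majorant r h x + bump_majorant r g x)"
    if "0 \<le> x" "x \<le> y" "y \<le> 1" for x y
    using bump_increment_le_majorant[OF assms(1) that, of h]
      bump_increment_le_majorant[OF assms(1) that, of g] by linarith
  from variation_le_majorant[of ?D "\<lambda>x. bump_majorant r h x + bump_majorant r g x", OF this]
  have bdd: "bdd_above (var_sums ?D)" and "variation ?D \<le> 2 * r"
    by (simp_all add: bump_majorant_def)
  moreover obtain N :: nat where "0 < N"
    "(\<Sum>i<2 * N. \<bar>?D (real (Suc i) / (2 * N)) - ?D (real i / (2 * N))\<bar>) = 2 * r"
    using bump_diff_grid_sum[OF assms] by blast
  then have "2 * r \<le> variation ?D"
    using grid_var_sum_le_variation[OF bdd, of "2 * N"] by simp
  ultimately show ?thesis by (simp add: bv_norm_def)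
qed

theorem mainTheorem6:
  fixes r :: real
  assumes "r > 0"
  shows "\<exists>J :: real set. is_interval J \<and> uncountable J \<and>
    (\<exists>F :: real \<Rightarrow> real \<Rightarrow> real.
       (\<forall>h\<in>J. F h \<in> CBV \<and> F h \<in> BV_ball r \<and> F h 0 = 0 \<and> F h 1 = 0) \<and>
       (\<forall>h1\<in>J. \<forall>h2\<in>J. h1 \<noteq> h2 \<longrightarrow> bv_norm (\<lambda>x. F h1 x - F h2 x) = 2 * r))"
proof (intro exI conjI)
  show "is_interval {0<..<1::real}" by simp
  show "uncountable {0<..<1::real}" by (simp add: uncountable_open_interval)
  show "\<forall>h\<in>{0<..<1}. bump r h \<in> CBV \<and> bump r h \<in> BV_ball r \<and> bump r h 0 = 0 \<and> bump r h 1 = 0"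
    using bump_in_BV_ball[OF assms] by (simp add: BV_ball_def)
  show "\<forall>h1\<in>{0<..<1}. \<forall>h2\<in>{0<..<1}. h1 \<noteq> h2 \<longrightarrow> bv_norm (\<lambda>x. bump r h1 x - bump r h2 x) = 2 * r"
    using bv_norm_bump_diff[OF assms] by simp
qed

end
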